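(* Let $\mathcal{A}=(Q,\delta,I,F)$ be a complete Büchi automaton and let $p,q,r\in Q$ and $a\in\Sigma$ be such that $q\in\delta(r,a)$ and $p\preceq_{\mathit{de}}q$. Let $\mathcal{A}'=(Q,\delta',I,F)$ where $\delta'=\delta\cup\{r\xrightarrow{a}p\}$ (i.e. $\delta'(r,a)=\delta(r,a)\cup\{p\}$ and $\delta'$ agrees with $\delta$ elsewhere). Then $\mathcal{L}(\mathcal{A})=\mathcal{L}(\mathcal{A}')$.
   Context: A Büchi automaton is $\mathcal{A}=(Q,\delta,I,F)$ over a finite alphabet $\Sigma$ with $\delta:Q\times\Sigma\to2^Q$, complete if $\delta(q,a)\ne\emptyset$ always. A run from $q$ on $\alpha=\alpha_0\alpha_1\cdots$ is $\rho$ with $\rho_0=q$, $\rho_{i+1}\in\delta(\rho_i,\alpha_i)$; accepting if some state of $F$ occurs infinitely often; $\mathcal{L}(\mathcal{A})$ is the set of words with an accepting run from an initial state. Delayed simulation: in the game from $(p_0,r_0)$, in round $i$ Spoiler picks $p_i\xrightarrow{\alpha_i}p_{i+1}$ and Duplicator answers $r_i\xrightarrow{\alpha_i}r_{i+1}$; a Duplicator strategy is a map $\sigma$ with $\sigma(r,p\xrightarrow{a}p')\in\delta(r,a)$ (no lookahead). Duplicator wins if for all $i$, $p_i\in F$ implies $r_k\in F$ for some $k\ge i$. $p\preceq_{\mathit{de}}r$ (the delayed simulation on $\mathcal{A}$) iff Duplicator has a winning strategy in $\mathcal{A}$ from $(p,r)$. *)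

theory Defs
  imports Main
begin

definition buchi_wf :: "'q set \<Rightarrow> ('q \<Rightarrow> 'a \<Rightarrow> 'q set) \<Rightarrow> 'q set \<Rightarrow> 'q set \<Rightarrow> bool" where
  "buchi_wf Q \<delta> I F \<longleftrightarrow> finite Q \<and> I \<subseteq> Q \<and> F \<subseteq> Q \<and>
     (\<forall>q\<in>Q. \<forall>a. \<delta> q a \<subseteq> Q)"

definition complete :: "'q set \<Rightarrow> ('q \<Rightarrow> 'a \<Rightarrow> 'q set) \<Rightarrow> bool" where
  "complete Q \<delta> \<longleftrightarrow> (\<forall>q\<in>Q. \<forall>a. \<delta> q a \<noteq> {})"

definition is_run :: "('q \<Rightarrow> 'a \<Rightarrow> 'q set) \<Rightarrow> 'q \<Rightarrow> (nat \<Rightarrow> 'a) \<Rightarrow> (nat \<Rightarrow> 'q) \<Rightarrow> bool" where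
  "is_run \<delta> q \<alpha> \<rho> \<longleftrightarrow> \<rho> 0 = q \<and> (\<forall>i. \<rho> (Suc i) \<in> \<delta> (\<rho> i) (\<alpha> i))"

definition accepting :: "'q set \<Rightarrow> (nat \<Rightarrow> 'q) \<Rightarrow> bool" where
  "accepting F \<rho> \<longleftrightarrow> (\<exists>\<^sub>\<infinity>i. \<rho> i \<in> F)"

definition lang :: "('q \<Rightarrow> 'a \<Rightarrow> 'q set) \<Rightarrow> 'q set \<Rightarrow> 'q set \<Rightarrow> (nat \<Rightarrow> 'a) set" where
  "lang \<delta> I F = {\<alpha>. \<exists>q\<in>I. \<exists>\<rho>. is_run \<delta> q \<alpha> \<rho> \<and> accepting F \<rho>}"

text \<open>Duplicator's response sequence in the game, given Spoiler's run p on word \<alpha>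
  and a (lookahead-free) Duplicator strategy \<sigma>, which maps the current Duplicator
  state and Spoiler's transition (p, a, p') to a successor.\<close>
fun dup_play :: "('q \<Rightarrow> 'q \<times> 'a \<times> 'q \<Rightarrow> 'q) \<Rightarrow> 'q \<Rightarrow> (nat \<Rightarrow> 'q) \<Rightarrow> (nat \<Rightarrow> 'a) \<Rightarrow> nat \<Rightarrow> 'q" where
  "dup_play \<sigma> r0 p \<alpha> 0 = r0"
| "dup_play \<sigma> r0 p \<alpha> (Suc i) = \<sigma> (dup_play \<sigma> r0 p \<alpha> i) (p i, \<alpha> i, p (Suc i))"

definition is_strategy :: "('q \<Rightarrow> 'a \<Rightarrow> 'q set) \<Rightarrow> ('q \<Rightarrow> 'q \<times> 'a \<times> 'q \<Rightarrow> 'q) \<Rightarrow> bool" where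
  "is_strategy \<delta> \<sigma> \<longleftrightarrow> (\<forall>r p a p'. p' \<in> \<delta> p a \<longrightarrow> \<sigma> r (p, a, p') \<in> \<delta> r a)"

definition delayed_sim :: "('q \<Rightarrow> 'a \<Rightarrow> 'q set) \<Rightarrow> 'q set \<Rightarrow> 'q \<Rightarrow> 'q \<Rightarrow> bool" where
  "delayed_sim \<delta> F p0 r0 \<longleftrightarrow> (\<exists>\<sigma>. is_strategy \<delta> \<sigma> \<and>
     (\<forall>\<alpha> p. is_run \<delta> p0 \<alpha> p \<longrightarrow>
        (\<forall>i. p i \<in> F \<longrightarrow> (\<exists>k\<ge>i. dup_play \<sigma> r0 p \<alpha> k \<in> F))))"

end

(*
  A run \<rho> of the saturated automaton may use the new transition r -a-> p infinitely
  often, so its uses cannot be removed one at a time. Instead, layer k of the repaired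
  run follows \<rho> up to the (k+1)-st use of the new transition, takes r -a-> q there
  instead, and from then on plays Duplicator's winning strategy for p \<preceq>de q against
  layer k+1. At any time only finitely many layers have left \<rho>, so all layers are
  well defined, and layer 0 is a run of the original automaton. An accepting visit of \<rho>
  at time n is shared by the layer numbered by the uses before n, and the delayed
  winning condition passes it down from each layer to the one below, so layer 0 is
  accepting.
*)

theory Submission
  imports Defs "HOL-Library.Infinite_Set"
begin

lemma lang_mono:
  assumes "\<And>s b. \<delta> s b \<subseteq> \<delta>' s b"
  shows "lang \<delta> I F \<subseteq> lang \<delta>' I F"
  using assms unfolding lang_def is_run_def by blast

locale saturated_run =
  fixes \<delta> :: "'q \<Rightarrow> 'a \<Rightarrow> 'q set" and F :: "'q set" and \<sigma> :: "'q \<Rightarrow> 'q \<times> 'a \<times> 'q \<Rightarrow> 'q"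
    and p q r :: 'q and a :: 'a and \<alpha> :: "nat \<Rightarrow> 'a" and \<rho> :: "nat \<Rightarrow> 'q"
  assumes strategy: "is_strategy \<delta> \<sigma>"
    and winning: "\<And>\<beta> S i. is_run \<delta> p \<beta> S \<Longrightarrow> S i \<in> F \<Longrightarrow> \<exists>k\<ge>i. dup_play \<sigma> q S \<beta> k \<in> F"
    and q_succ: "q \<in> \<delta> r a"
    and run_steps: "\<And>i. \<rho> (Suc i) \<in> \<delta> (\<rho> i) (\<alpha> i) \<or> (\<rho> i = r \<and> \<alpha> i = a \<and> \<rho> (Suc i) = p)"
begin

abbreviation new_step :: "nat \<Rightarrow> bool" where
  "new_step i \<equiv> \<rho> (Suc i) \<notin> \<delta> (\<rho> i) (\<alpha> i)"

lemma new_step_edge: "new_step i \<Longrightarrow> \<rho> i = r \<and> \<alpha> i = a \<and> \<rho> (Suc i) = p"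
  using run_steps by blast

fun new_steps_before :: "nat \<Rightarrow> nat" where
  "new_steps_before 0 = 0"
| "new_steps_before (Suc n) = new_steps_before n + (if new_step n then 1 else 0)"

lemma new_steps_before_le: "new_steps_before n \<le> n"
  by (induction n) auto

lemma new_steps_before_mono: "m \<le> n \<Longrightarrow> new_steps_before m \<le> new_steps_before n"
  by (induction n rule: dec_induct) auto

lemma new_step_of_count:
  "k < new_steps_before n \<Longrightarrow> \<exists>m<n. new_step m \<and> new_steps_before m = k"
proof (induction n)
  case (Suc n)
  then show ?case by (cases "k < new_steps_before n") (auto intro: less_SucI split: if_splits)
qed simp

function layer :: "nat \<Rightarrow> nat \<Rightarrow> 'q" where
  "layer k 0 = \<rho> 0"
| "layer k (Suc m) =
    (if new_steps_before (Suc m) \<le> k then \<rho> (Suc m)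
     else if new_steps_before m = k then q
     else \<sigma> (layer k m) (layer (Suc k) m, \<alpha> m, layer (Suc k) (Suc m)))"
  by pat_completeness auto
termination
proof (relation "measure (\<lambda>(k, n). n - k)")
  fix k m
  assume "\<not> new_steps_before (Suc m) \<le> k"
  then have "k \<le> m" using new_steps_before_le[of "Suc m"] by simp
  then show "((k, m), k, Suc m) \<in> measure (\<lambda>(k, n). n - k)"
    and "((Suc k, m), k, Suc m) \<in> measure (\<lambda>(k, n). n - k)"
    and "((Suc k, Suc m), k, Suc m) \<in> measure (\<lambda>(k, n). n - k)"
    by auto
qed simp

declare layer.simps(2) [simp del]

lemma layer_before_switch: "new_steps_before n \<le> k \<Longrightarrow> layer k n = \<rho> n"
  by (cases n) (simp_all add: layer.simps(2))

lemma layer_switch: "new_step m \<Longrightarrow> new_steps_before m = k \<Longrightarrow> layer k (Suc m) = q"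
  by (simp add: layer.simps(2))

lemma layer_after_switch:
  assumes "k < new_steps_before m"
  shows "layer k (Suc m) = \<sigma> (layer k m) (layer (Suc k) m, \<alpha> m, layer (Suc k) (Suc m))"
proof -
  have "k < new_steps_before (Suc m)" using assms new_steps_before_mono[of m "Suc m"] by simp
  with assms show ?thesis by (subst layer.simps(2)) simp
qed

lemma layer_step:
  assumes "k \<le> new_steps_before m"
  shows "layer k (Suc m) \<in> \<delta> (layer k m) (\<alpha> m)"
  using assms
proof (induction k rule: inc_induct)
  case base
  show ?case
  proof (cases "new_step m")
    case True
    then show ?thesis using new_step_edge q_succ layer_before_switch layer_switch by auto
  next
    case False
    then show ?thesis using layer_before_switch[of "Suc m"] layer_before_switch[of m] by simp
  qed
next
  case (step k)
  then show ?case using strategy layer_after_switch unfolding is_strategy_def by simp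
qed

lemma run_layer_0: "is_run \<delta> (\<rho> 0) \<alpha> (layer 0)"
  unfolding is_run_def using layer_step by simp

lemma layer_suffix_run:
  assumes "new_step m" "new_steps_before m = k"
  shows "is_run \<delta> p (\<lambda>i. \<alpha> (Suc m + i)) (\<lambda>i. layer (Suc k) (Suc m + i))"
  unfolding is_run_def
proof (intro conjI allI)
  show "layer (Suc k) (Suc m + 0) = p"
    using assms new_step_edge layer_before_switch[of "Suc m"] by simp
  fix i
  have "Suc k \<le> new_steps_before (Suc m + i)"
    using assms new_steps_before_mono[of "Suc m" "Suc m + i"] by simp
  then show "layer (Suc k) (Suc m + Suc i) \<in> \<delta> (layer (Suc k) (Suc m + i)) (\<alpha> (Suc m + i))"
    using layer_step by simp
qed

lemma dup_play_layer_suffix: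
  assumes "new_step m" "new_steps_before m = k"
  shows "dup_play \<sigma> q (\<lambda>i. layer (Suc k) (Suc m + i)) (\<lambda>i. \<alpha> (Suc m + i)) i = layer k (Suc m + i)"
proof (induction i)
  case 0
  then show ?case using assms layer_switch by simp
next
  case (Suc i)
  have "k < new_steps_before (Suc m + i)"
    using assms new_steps_before_mono[of "Suc m" "Suc m + i"] by simp
  then show ?case using Suc layer_after_switch by simp
qed

lemma layer_accepting_descends:
  assumes "layer (Suc k) n \<in> F"
  shows "\<exists>n'\<ge>n. layer k n' \<in> F"
proof (cases "new_steps_before n \<le> k")
  case True
  then show ?thesis using assms layer_before_switch[of n] by auto
next
  case False
  then obtain m where m: "m < n" "new_step m" "new_steps_before m = k"
    using new_step_of_count by (meson not_le)
  have "layer (Suc k) (Suc m + (n - Suc m)) \<in> F" using assms m by simp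
  then obtain i where "i \<ge> n - Suc m" "layer k (Suc m + i) \<in> F"
    using winning[OF layer_suffix_run[OF m(2,3)]] dup_play_layer_suffix[OF m(2,3)] by metis
  then show ?thesis using m by (intro exI[of _ "Suc m + i"]) auto
qed

lemma layer_accepting_descends_to:
  "layer (k + d) n \<in> F \<Longrightarrow> \<exists>n'\<ge>n. layer k n' \<in> F"
proof (induction d arbitrary: n)
  case (Suc d)
  then show ?case using layer_accepting_descends[of "k + d" n] by (metis add_Suc_right order_trans)
qed auto

lemma accepting_layer_0:
  assumes "accepting F \<rho>"
  shows "accepting F (layer 0)"
  unfolding accepting_def INFM_nat_le
proof
  fix N
  obtain n where "n \<ge> N" "\<rho> n \<in> F" using assms unfolding accepting_def INFM_nat_le by blast
  then have "layer (0 + new_steps_before n) n \<in> F" using layer_before_switch by simp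
  then show "\<exists>n'\<ge>N. layer 0 n' \<in> F" using \<open>n \<ge> N\<close> layer_accepting_descends_to by (meson order_trans)
qed

end

lemma lang_add_transition_subset:
  assumes "delayed_sim \<delta> F p q" "q \<in> \<delta> r a"
  shows "lang (\<delta>(r := (\<delta> r)(a := \<delta> r a \<union> {p}))) I F \<subseteq> lang \<delta> I F"
proof
  fix \<alpha> assume "\<alpha> \<in> lang (\<delta>(r := (\<delta> r)(a := \<delta> r a \<union> {p}))) I F"
  then obtain \<rho> where init: "\<rho> 0 \<in> I" and acc: "accepting F \<rho>"
    and steps: "\<And>i. \<rho> (Suc i) \<in> \<delta> (\<rho> i) (\<alpha> i) \<or> (\<rho> i = r \<and> \<alpha> i = a \<and> \<rho> (Suc i) = p)"
    unfolding lang_def is_run_def by (auto split: if_splits)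
  obtain \<sigma> where "is_strategy \<delta> \<sigma>"
    and "\<And>\<beta> S i. is_run \<delta> p \<beta> S \<Longrightarrow> S i \<in> F \<Longrightarrow> \<exists>k\<ge>i. dup_play \<sigma> q S \<beta> k \<in> F"
    using assms(1) unfolding delayed_sim_def by blast
  then interpret saturated_run \<delta> F \<sigma> p q r a \<alpha> \<rho>
    using assms(2) steps by unfold_locales
  show "\<alpha> \<in> lang \<delta> I F"
    unfolding lang_def using init run_layer_0 accepting_layer_0[OF acc] by blast
qed

theorem lemma11:
  fixes Q :: "'q set" and \<delta> :: "'q \<Rightarrow> ('a::finite) \<Rightarrow> 'q set" and I F :: "'q set"
    and p q r :: 'q and a :: 'a
  assumes "buchi_wf Q \<delta> I F"
    and "complete Q \<delta>"
    and "p \<in> Q" "q \<in> Q" "r \<in> Q"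
    and "q \<in> \<delta> r a"
    and "delayed_sim \<delta> F p q"
  shows "lang \<delta> I F = lang (\<delta>(r := (\<delta> r)(a := \<delta> r a \<union> {p}))) I F"
proof
  show "lang \<delta> I F \<subseteq> lang (\<delta>(r := (\<delta> r)(a := \<delta> r a \<union> {p}))) I F"
    by (rule lang_mono) auto
  show "lang (\<delta>(r := (\<delta> r)(a := \<delta> r a \<union> {p}))) I F \<subseteq> lang \<delta> I F"
    using assms(7,6) by (rule lang_add_transition_subset)
qed

end
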